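(* Let $x_1,\dots,x_N$ be elements of a unital C*-algebra satisfying $\sum_ix_ix_i^*=\sum_ix_i^*x_i=1$, and consider the following conditions: (1) $abc=cba$ for all $a,b,c\in\{x_i\}$; (2) $ab^*c=cb^*a$ for all $a,b,c\in\{x_i\}$; (3) $abc^*=c^*ba$ for all $a,b,c\in\{x_i\}$. Then $(1)\iff(3)$, and $(1)\Rightarrow(2)$. *)

theory Defs
  imports Complex_Main
begin

text \<open>Unital C*-algebras: a complete normed unital algebra over the complex numbers
  (given here as a real Banach algebra with a compatible complex scalar multiplication)
  with a conjugate-linear, anti-multiplicative involution satisfying the C*-identity.\<close>

class cstar_algebra = banach + real_normed_algebra_1 +
  fixes scaleC :: "complex \<Rightarrow> 'a \<Rightarrow> 'a"
    and cstar :: "'a \<Rightarrow> 'a"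
  assumes scaleC_of_real: "scaleC (complex_of_real r) x = scaleR r x"
    and scaleC_add_left: "scaleC (a + b) x = scaleC a x + scaleC b x"
    and scaleC_add_right: "scaleC a (x + y) = scaleC a x + scaleC a y"
    and scaleC_scaleC: "scaleC a (scaleC b x) = scaleC (a * b) x"
    and scaleC_one: "scaleC 1 x = x"
    and norm_scaleC: "norm (scaleC a x) = cmod a * norm x"
    and mult_scaleC_left: "scaleC a x * y = scaleC a (x * y)"
    and mult_scaleC_right: "x * scaleC a y = scaleC a (x * y)"
    and cstar_cstar: "cstar (cstar x) = x"
    and cstar_add: "cstar (x + y) = cstar x + cstar y"
    and cstar_scaleC: "cstar (scaleC a x) = scaleC (cnj a) (cstar x)"
    and cstar_mult: "cstar (x * y) = cstar y * cstar x"
    and cstar_identity: "norm (cstar x * x) = norm x ^ 2"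

end

(*
  Write y_i for x_i^*.  Under (1), put z_ijk = x_i x_j y_k - y_k x_j x_i.  Expanding
  \<Sum>_ijk (z z^* + z^* z) gives eight sums of words of length six.  Four are nested,
  such as \<Sum> x_i x_j y_k x_k y_j y_i, and collapse to 1 by \<Sum> x_i y_i = \<Sum> y_i x_i = 1;
  the other four become nested after one application of (1) or of its adjoint.  Hence
  the sum is 4 - 4 = 0, and positivity forces every z_ijk = 0, which is (3).  The same
  computation with z_ijk = x_i x_j x_k - x_k x_j x_i gives (3) \<Longrightarrow> (1), and (2) follows
  from (1) and (3) by inserting 1 = \<Sum>_l x_l y_l.

  Positivity is developed without spectral theory: a is called positive when
  \<parallel>1 - \<epsilon>a\<parallel> \<le> 1 + O(\<epsilon>\<^sup>2).  Squares of self-adjoint elements are positive (via the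
  Cayley transform of a skew element), sums of positive elements are positive, and a
  self-adjoint A with A and -A positive vanishes: (1 + zA)^n stays bounded for z = \<plusminus>w, \<plusminus>iw
  with w ~ 1/n, while a discrete Cauchy estimate recovers nwA from these four values.
*)

theory Submission
  imports Defs
begin

section \<open>Involution and complex scalars\<close>

lemma cstar_zero [simp]: "cstar 0 = 0"
  using cstar_add[of 0 0] by simp

lemma cstar_minus: "cstar (- x) = - cstar x"
  using cstar_add[of x "- x"] by (simp add: eq_neg_iff_add_eq_0 add.commute)

lemma cstar_diff: "cstar (x - y) = cstar x - cstar y"
  using cstar_add[of x "- y"] by (simp add: cstar_minus)

lemma cstar_one [simp]: "cstar 1 = 1"
  using cstar_mult[of "cstar 1" 1] by (simp add: cstar_cstar)

lemma cstar_sum: "cstar (sum f A) = (\<Sum>k\<in>A. cstar (f k))"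
  by (induction A rule: infinite_finite_induct) (simp_all add: cstar_add)

lemma scaleC_zero_left [simp]: "scaleC 0 x = 0"
  using scaleC_of_real[of 0 x] by simp

lemma scaleC_zero_right [simp]: "scaleC a 0 = 0"
  using scaleC_add_right[of a 0 0] by simp

lemma scaleC_minus_left: "scaleC (- a) x = - scaleC a x"
  using scaleC_add_left[of a "- a" x] by (simp add: eq_neg_iff_add_eq_0 add.commute)

lemma scaleC_minus_right: "scaleC a (- x) = - scaleC a x"
  using scaleC_add_right[of a x "- x"] by (simp add: eq_neg_iff_add_eq_0 add.commute)

lemma scaleC_diff_left: "scaleC (a - b) x = scaleC a x - scaleC b x"
  using scaleC_add_left[of a "- b" x] by (simp add: scaleC_minus_left)

lemma scaleC_sum_right: "scaleC a (sum f A) = (\<Sum>k\<in>A. scaleC a (f k))"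
  by (induction A rule: infinite_finite_induct) (simp_all add: scaleC_add_right)

lemma scaleC_mult_scaleC: "scaleC a x * scaleC b y = scaleC (a * b) (x * y)"
  by (simp add: mult_scaleC_left mult_scaleC_right scaleC_scaleC mult.commute)

lemma scaleC_power: "scaleC a x ^ n = scaleC (a ^ n) (x ^ n)"
  by (induction n) (simp_all add: scaleC_one scaleC_mult_scaleC)

lemma cstar_scaleR: "cstar (scaleR r x) = scaleR r (cstar x)"
  using cstar_scaleC[of "complex_of_real r" x] by (simp add: scaleC_of_real)

lemma norm_cstar [simp]: "norm (cstar x) = norm x"
proof -
  have le: "norm y \<le> norm (cstar y)" for y :: 'a
  proof -
    have "norm y * norm y \<le> norm (cstar y) * norm y"
      using cstar_identity[of y] norm_mult_ineq[of "cstar y" y] by (simp add: power2_eq_square)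
    then show ?thesis
      by (cases "y = 0") simp_all
  qed
  show ?thesis
    using le[of x] le[of "cstar x"] by (simp add: cstar_cstar)
qed

lemma norm_eq_one_if_cstar_mult_self_eq_one: "cstar u * u = 1 \<Longrightarrow> norm u = 1"
  using cstar_identity[of u] norm_ge_zero[of u] by (auto simp: power2_eq_1_iff)

lemma norm_one_plus_skew:
  assumes "cstar y = - y"
  shows "norm (1 + y) ^ 2 = norm (1 - y * y)"
  using cstar_identity[of "1 + y"] assms by (simp add: cstar_add algebra_simps)

lemma cstar_scaleC_imaginary:
  "cstar h = h \<Longrightarrow> cstar (scaleC (\<i> * of_real t) h) = - scaleC (\<i> * of_real t) h"
  by (simp add: cstar_scaleC scaleC_minus_left)

lemma scaleC_imaginary_square:
  "scaleC (\<i> * of_real t) h * scaleC (\<i> * of_real t) h = - scaleR (t\<^sup>2) (h * h)"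
proof -
  have "(\<i> * complex_of_real t) * (\<i> * complex_of_real t) = - complex_of_real (t\<^sup>2)"
    by (simp add: algebra_simps power2_eq_square)
  then show ?thesis
    by (simp add: scaleC_mult_scaleC scaleC_minus_left scaleC_of_real flip: of_real_power)
qed

section \<open>A norm characterisation of positivity\<close>

text \<open>For self-adjoint \<open>a\<close> this says that the spectrum of \<open>a\<close> lies in \<open>[0, \<infinity>)\<close>, since
  \<open>\<parallel>1 - \<epsilon>a\<parallel>\<close> is the largest \<open>|1 - \<epsilon>\<lambda>|\<close> over the spectrum; but it is phrased purely in terms
  of norms.\<close>

definition positive :: "'a::cstar_algebra \<Rightarrow> bool" where
  "positive a \<longleftrightarrow>
     (\<exists>K \<delta>. 0 < \<delta> \<and> (\<forall>\<epsilon>. 0 < \<epsilon> \<longrightarrow> \<epsilon> < \<delta> \<longrightarrow> norm (1 - scaleR \<epsilon> a) \<le> 1 + K * \<epsilon>\<^sup>2))"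

lemma positive_zero: "positive 0"
  unfolding positive_def by (rule exI[of _ 0], rule exI[of _ 1]) simp

lemma positive_add:
  assumes "positive a" "positive b"
  shows "positive (a + b)"
proof -
  obtain K1 d1 where d1: "0 < d1"
    and h1: "\<And>e. 0 < e \<Longrightarrow> e < d1 \<Longrightarrow> norm (1 - scaleR e a) \<le> 1 + K1 * e\<^sup>2"
    using assms(1) unfolding positive_def by blast
  obtain K2 d2 where d2: "0 < d2"
    and h2: "\<And>e. 0 < e \<Longrightarrow> e < d2 \<Longrightarrow> norm (1 - scaleR e b) \<le> 1 + K2 * e\<^sup>2"
    using assms(2) unfolding positive_def by blast
  show ?thesis
    unfolding positive_def
  proof (intro exI conjI allI impI)
    show "0 < min d1 d2 / 2"
      using d1 d2 by simp
    fix e :: real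
    assume e: "0 < e" "e < min d1 d2 / 2"
    have "1 - scaleR e (a + b) = scaleR (1/2) (1 - scaleR (2*e) a) + scaleR (1/2) (1 - scaleR (2*e) b)"
      by (simp add: algebra_simps flip: scaleR_add_left)
    then have "norm (1 - scaleR e (a + b))
        \<le> 1/2 * norm (1 - scaleR (2*e) a) + 1/2 * norm (1 - scaleR (2*e) b)"
      by (metis norm_triangle_ineq norm_scaleR abs_of_pos divide_pos_pos zero_less_one zero_less_numeral)
    also have "\<dots> \<le> 1/2 * (1 + K1 * (2*e)\<^sup>2) + 1/2 * (1 + K2 * (2*e)\<^sup>2)"
      using h1[of "2*e"] h2[of "2*e"] e by (intro add_mono) auto
    also have "\<dots> = 1 + (2 * (K1 + K2)) * e\<^sup>2"
      by (simp add: algebra_simps power2_eq_square)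
    finally show "norm (1 - scaleR e (a + b)) \<le> 1 + (2 * (K1 + K2)) * e\<^sup>2" .
  qed
qed

lemma positive_sum: "finite F \<Longrightarrow> (\<And>k. k \<in> F \<Longrightarrow> positive (f k)) \<Longrightarrow> positive (sum f F)"
  by (induction F rule: finite_induct) (auto intro: positive_zero positive_add)

lemma invertible_one_minus:
  fixes x :: "'a::{real_normed_algebra_1,banach}"
  assumes "norm x < 1"
  obtains r where "r * (1 - x) = 1" "(1 - x) * r = 1"
proof -
  have summable: "summable (\<lambda>n. x ^ n)"
    by (rule summable_comparison_test[of _ "\<lambda>n. norm x ^ n"])
       (use assms norm_power_ineq in \<open>auto intro: summable_geometric\<close>)
  have telescope: "(\<lambda>n. x ^ n - x ^ Suc n) sums 1"
    using telescope_sums'[OF LIMSEQ_power_zero[OF assms]] by simp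
  have "(1 - x) * suminf (\<lambda>n. x ^ n) = 1"
    using suminf_mult[OF summable, of "1 - x"] sums_unique[OF telescope]
    by (simp add: algebra_simps)
  moreover have "suminf (\<lambda>n. x ^ n) * (1 - x) = 1"
    using suminf_mult2[OF summable, of "1 - x"] sums_unique[OF telescope]
    by (simp add: algebra_simps power_commutes)
  ultimately show ?thesis
    using that by blast
qed

lemma norm_inverse_one_minus_skew_le:
  assumes skew: "cstar x = - x" and r: "r * (1 - x) = 1" "(1 - x) * r = 1"
  shows "norm r \<le> 1"
proof -
  define s where "s = cstar r"
  have s: "s * (1 + x) = 1" "(1 + x) * s = 1"
    using arg_cong[OF r(2), of cstar] arg_cong[OF r(1), of cstar]
    by (simp_all add: s_def cstar_mult cstar_diff skew)
  have "r + s = s * (1 + x) * r + s * ((1 - x) * r)"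
    using r s by simp
  also have "\<dots> = s * r + s * r"
    by (simp add: algebra_simps)
  finally have rs: "r + s = s * r + s * r" .
  \<comment> \<open>The Cayley transform \<open>(1 + x)(1 - x)\<^sup>-\<^sup>1 = 2r - 1\<close> of the skew element \<open>x\<close> is unitary.\<close>
  define U where "U = r + r - 1"
  have "cstar U * U = (s + s - 1) * (r + r - 1)"
    by (simp add: U_def s_def cstar_add cstar_diff)
  also have "\<dots> = 1"
    using rs by (simp add: algebra_simps)
  finally have "norm U = 1"
    by (rule norm_eq_one_if_cstar_mult_self_eq_one)
  moreover have "r = scaleR (1/2) (U + 1)"
    by (simp add: U_def scaleR_add_right[symmetric])
  ultimately show ?thesis
    using norm_triangle_ineq[of U 1] by simp
qed

lemma norm_one_minus_square_le:
  assumes sa: "cstar h = h" and e: "0 < e" "e * norm h ^ 2 < 1"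
  shows "norm (1 - scaleR e (h * h)) \<le> 1 + e\<^sup>2 * norm h ^ 4"
proof -
  define x where "x = scaleC (\<i> * of_real (sqrt e)) h"
  have skew: "cstar x = - x"
    unfolding x_def using sa by (rule cstar_scaleC_imaginary)
  have xx: "x * x = - scaleR e (h * h)"
    unfolding x_def scaleC_imaginary_square using e by simp
  have "norm x ^ 2 = e * norm h ^ 2"
    using e by (simp add: x_def norm_scaleC norm_mult power_mult_distrib)
  then have "norm x ^ 2 < 1 ^ 2"
    using e by simp
  then have "norm x < 1"
    by (rule power_less_imp_less_base) simp
  then obtain r where r: "r * (1 - x) = 1" "(1 - x) * r = 1"
    by (rule invertible_one_minus)
  define s where "s = cstar r"
  have s: "s * (1 + x) = 1"
    using arg_cong[OF r(2), of cstar] by (simp add: s_def cstar_mult cstar_diff skew)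
  have nr: "norm r \<le> 1"
    using skew r by (rule norm_inverse_one_minus_skew_le)
  define p where "p = scaleR e (h * h)"
  \<comment> \<open>\<open>s r\<close> inverts \<open>1 + p = (1 - x)(1 + x)\<close>, and \<open>1 - p = (1 + p)\<^sup>-\<^sup>1 (1 - p\<^sup>2)\<close> gains a square.\<close>
  have "s * r * (1 + p) = s * (r * (1 - x)) * (1 + x)"
    using xx by (simp add: p_def algebra_simps)
  then have inv: "s * r * (1 + p) = 1"
    using r s by simp
  have "s * r * (1 - p * p) = s * r * (1 + p) * (1 - p)"
    by (simp add: algebra_simps)
  then have "1 - p = s * r * (1 - p * p)"
    using inv by simp
  then have "norm (1 - p) \<le> norm (s * r) * norm (1 - p * p)"
    by (metis norm_mult_ineq)
  also have "\<dots> \<le> 1 * (1 + norm p * norm p)"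
  proof (rule mult_mono)
    show "norm (s * r) \<le> 1"
      using norm_mult_ineq[of s r] nr mult_mono[OF nr nr] by (simp add: s_def)
    show "norm (1 - p * p) \<le> 1 + norm p * norm p"
      using norm_triangle_ineq4[of 1 "p * p"] norm_mult_ineq[of p p] by simp
  qed simp_all
  also have "\<dots> \<le> 1 + e\<^sup>2 * norm h ^ 4"
  proof -
    have np: "norm p \<le> e * norm h ^ 2"
      using e norm_mult_ineq[of h h] by (simp add: p_def power2_eq_square)
    show ?thesis
      using mult_mono[OF np np] e by (simp add: power2_eq_square power4_eq_xxxx mult_ac)
  qed
  finally show ?thesis
    by (simp add: p_def)
qed

lemma positive_square:
  assumes "cstar h = h"
  shows "positive (h * h)"
  unfolding positive_def
proof (intro exI conjI allI impI)
  show "0 < 1 / (norm h ^ 2 + 1)"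
    by (simp add: add_nonneg_pos)
  fix e :: real
  assume "0 < e" "e < 1 / (norm h ^ 2 + 1)"
  then have "e * norm h ^ 2 < 1"
    by (simp add: field_simps add_pos_nonneg)
  then show "norm (1 - scaleR e (h * h)) \<le> 1 + norm h ^ 4 * e\<^sup>2"
    using norm_one_minus_square_le[OF assms \<open>0 < e\<close>] by (simp add: mult.commute)
qed

lemma norm_one_plus_imaginary_le:
  assumes "cstar A = A"
  shows "norm (1 + scaleC (\<i> * of_real t) A) \<le> 1 + t\<^sup>2 * norm A ^ 2"
proof -
  define u where "u = t\<^sup>2 * norm A ^ 2"
  have "norm (1 + scaleC (\<i> * of_real t) A) ^ 2 = norm (1 + scaleR (t\<^sup>2) (A * A))"
    by (simp add: norm_one_plus_skew cstar_scaleC_imaginary[OF assms] scaleC_imaginary_square)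
  also have "\<dots> \<le> 1 + u"
    using norm_triangle_ineq[of 1 "scaleR (t\<^sup>2) (A * A)"] norm_mult_ineq[of A A]
      mult_left_mono[of "norm (A * A)" "norm A ^ 2" "t\<^sup>2"]
    by (simp add: u_def power2_eq_square)
  also have "\<dots> \<le> (1 + u) ^ 2"
  proof -
    have "0 \<le> u"
      by (simp add: u_def)
    then show ?thesis
      using mult_right_mono[of 1 "1 + u" "1 + u"] by (simp add: power2_eq_square)
  qed
  finally have "norm (1 + scaleC (\<i> * of_real t) A) \<le> 1 + u"
    by (rule power2_le_imp_le) (simp add: u_def)
  then show ?thesis
    by (simp add: u_def)
qed

lemma power_one_plus_binomial:
  fixes x :: "'a::{real_normed_algebra_1,banach}"
  shows "(1 + x) ^ n = (\<Sum>k\<le>n. real (n choose k) *\<^sub>R x ^ k)"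
proof -
  have series: "(1 / fact n) *\<^sub>R (1 + x) ^ n = (\<Sum>k\<le>n. (1 / (fact k * fact (n - k))) *\<^sub>R x ^ k)"
    using exp_series_add_commuting[of x 1 n] by (simp add: add.commute divide_inverse mult.commute)
  have "(1 + x) ^ n = fact n *\<^sub>R ((1 / fact n) *\<^sub>R (1 + x) ^ n)"
    by simp
  also have "\<dots> = (\<Sum>k\<le>n. real (n choose k) *\<^sub>R x ^ k)"
    unfolding series scaleR_sum_right by (intro sum.cong) (simp_all add: binomial_fact)
  finally show ?thesis .
qed

lemma power_one_plus_scaleC:
  "(1 + scaleC z A) ^ n = (\<Sum>k\<le>n. scaleC (of_nat (n choose k) * z ^ k) (A ^ k))"
  unfolding power_one_plus_binomial
  by (intro sum.cong) (simp_all add: scaleC_power scaleC_scaleC flip: scaleC_of_real)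

lemma fourth_roots_of_unity_filter:
  fixes c :: complex
  shows "c ^ k - \<i> * (\<i> * c) ^ k - (- c) ^ k + \<i> * (- (\<i> * c)) ^ k
    = (if k mod 4 = 1 then 4 * c ^ k else 0)"
proof -
  have "c ^ k - \<i> * (\<i> * c) ^ k - (- c) ^ k + \<i> * (- (\<i> * c)) ^ k
      = c ^ k * (1 - \<i> * \<i> ^ k - (- 1) ^ k + \<i> * (- 1) ^ k * \<i> ^ k)"
    unfolding power_minus[of c] power_minus[of "\<i> * c"] power_mult_distrib by (simp add: algebra_simps)
  moreover have reduce: "z ^ k = z ^ (k mod 4)" if "z ^ 4 = 1" for z :: complex
    by (metis div_mult_mod_eq power_add power_mult power_one mult_1 mult.commute that)
  then have "\<i> ^ k = \<i> ^ (k mod 4)" "(- 1 :: complex) ^ k = (- 1) ^ (k mod 4)"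
    by simp_all
  moreover have "k mod 4 = 0 \<or> k mod 4 = 1 \<or> k mod 4 = 2 \<or> k mod 4 = 3"
    by arith
  ultimately show ?thesis
    by (auto simp: power2_eq_square power3_eq_cube)
qed

lemma root_filter_power_one_plus:
  fixes A :: "'a::cstar_algebra" and w :: real and n :: nat
  defines "P z \<equiv> (1 + scaleC z A) ^ n"
  shows "P (of_real w) - scaleC \<i> (P (\<i> * of_real w)) - P (- of_real w) + scaleC \<i> (P (- (\<i> * of_real w)))
    = (\<Sum>k\<le>n. if k mod 4 = 1 then scaleR (4 * real (n choose k) * w ^ k) (A ^ k) else 0)"
proof -
  have "scaleC (of_nat (n choose k) * of_real w ^ k) (A ^ k)
      - scaleC \<i> (scaleC (of_nat (n choose k) * (\<i> * of_real w) ^ k) (A ^ k))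
      - scaleC (of_nat (n choose k) * (- of_real w) ^ k) (A ^ k)
      + scaleC \<i> (scaleC (of_nat (n choose k) * (- (\<i> * of_real w)) ^ k) (A ^ k))
    = (if k mod 4 = 1 then scaleR (4 * real (n choose k) * w ^ k) (A ^ k) else 0)" (is "?lhs k = _") for k
  proof -
    have "scaleC (of_nat (n choose k) * of_real w ^ k) (A ^ k)
      - scaleC \<i> (scaleC (of_nat (n choose k) * (\<i> * of_real w) ^ k) (A ^ k))
      - scaleC (of_nat (n choose k) * (- of_real w) ^ k) (A ^ k)
      + scaleC \<i> (scaleC (of_nat (n choose k) * (- (\<i> * of_real w)) ^ k) (A ^ k))
      = scaleC (of_nat (n choose k) * (of_real w ^ k - \<i> * (\<i> * of_real w) ^ k
          - (- of_real w) ^ k + \<i> * (- (\<i> * of_real w)) ^ k)) (A ^ k)"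
      by (simp add: scaleC_scaleC scaleC_add_left scaleC_diff_left algebra_simps)
    also have "\<dots> = scaleC (of_nat (n choose k) * (if k mod 4 = 1 then 4 * of_real w ^ k else 0)) (A ^ k)"
      unfolding fourth_roots_of_unity_filter ..
    also have "\<dots> = (if k mod 4 = 1 then scaleR (4 * real (n choose k) * w ^ k) (A ^ k) else 0)"
      by (simp add: mult.assoc mult.left_commute flip: scaleC_of_real)
    finally show ?thesis .
  qed
  then have "(\<Sum>k\<le>n. ?lhs k) = (\<Sum>k\<le>n. if k mod 4 = 1 then scaleR (4 * real (n choose k) * w ^ k) (A ^ k) else 0)"
    by simp
  then show ?thesis
    unfolding P_def power_one_plus_scaleC scaleC_sum_right
    by (simp only: sum_subtractf sum.distrib)
qed

lemma exp_two_tail_le: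
  "(\<Sum>k\<le>n. if 5 \<le> k then 2 ^ k / fact k else 0) \<le> (8/15 :: real)"
proof -
  \<comment> \<open>From \<open>k = 5\<close> on the terms at least halve, so twice the next term bounds the remaining tail.\<close>
  have "(\<Sum>k\<le>n. if 5 \<le> k then 2 ^ k / fact k else 0)
      + (if 5 \<le> n then 2 * (2 ^ Suc n / fact (Suc n)) else 0) \<le> (8/15 :: real)"
  proof (induction n)
    case (Suc n)
    show ?case
    proof (cases "5 \<le> n")
      case True
      have "(2::real) ^ Suc (Suc n) / fact (Suc (Suc n)) = 2 ^ Suc n / fact (Suc n) * (2 / (Suc (Suc n)))"
        by (simp add: field_simps)
      also have "\<dots> \<le> 2 ^ Suc n / fact (Suc n) * (1/2)"
        using True by (intro mult_left_mono) (simp_all add: field_simps)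
      finally show ?thesis
        using Suc True by simp
    next
      case False
      then have "(\<Sum>k\<le>n. if 5 \<le> k then (2::real) ^ k / fact k else 0) = 0"
        by (intro sum.neutral) auto
      moreover have "fact 5 = (120::real)" "fact 6 = (720::real)"
        by (simp_all add: fact_numeral)
      ultimately show ?thesis
        using False by (cases "n = 4") simp_all
    qed
  qed simp
  then show ?thesis
    by (smt (verit) zero_le_divide_iff zero_le_power fact_ge_zero)
qed

lemma binomial_mult_power_le:
  assumes "0 < n" "0 \<le> c"
  shows "real (n choose k) * (c / real n) ^ k \<le> c ^ k / fact k"
proof -
  have "real (n choose k) * fact k \<le> real n ^ k"
    using binomial_fact_pow[of n k] by (metis of_nat_fact of_nat_le_iff of_nat_mult of_nat_power)
  then have "real (n choose k) \<le> real n ^ k / fact k"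
    by (simp add: field_simps)
  then have "real (n choose k) * (c / real n) ^ k \<le> real n ^ k / fact k * (c / real n) ^ k"
    using assms(2) by (intro mult_right_mono) auto
  also have "\<dots> = c ^ k / fact k"
    using assms by (simp add: power_divide field_simps)
  finally show ?thesis .
qed

lemma norm_power_le_of_norm_le:
  fixes y :: "'a::real_normed_algebra_1"
  assumes "norm y \<le> 1 + u" "0 \<le> u" "real n * u \<le> 1/8"
  shows "norm (y ^ n) \<le> 5/4"
proof -
  have "norm (y ^ n) \<le> norm y ^ n"
    by (rule norm_power_ineq)
  also have "\<dots> \<le> exp u ^ n"
    using assms(1) order_trans[OF _ exp_ge_add_one_self, of _ u] by (simp add: power_mono)
  also have "\<dots> = exp (real n * u)"
    by (simp add: exp_of_nat_mult)
  also have "\<dots> \<le> 1 + 2 * (real n * u)"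
    by (rule real_exp_bound_lemma) (use assms in auto)
  also have "\<dots> \<le> 5/4"
    using assms by simp
  finally show ?thesis .
qed

lemma norm_root_filter_ge:
  fixes A :: "'a::cstar_algebra"
  assumes "A \<noteq> 0" "0 < n"
  defines "w \<equiv> 2 / (norm A * real n)"
  shows "88/15 \<le> norm (\<Sum>k\<le>n. if k mod 4 = 1 then scaleR (4 * real (n choose k) * w ^ k) (A ^ k) else 0)"
proof -
  define g where "g k = (if k mod 4 = 1 then scaleR (4 * real (n choose k) * w ^ k) (A ^ k) else 0)" for k
  have w: "0 < w" "w * norm A = 2 / real n"
    using assms by (simp_all add: w_def)
  have g1: "norm (g 1) = 8"
    using assms by (simp add: g_def w_def)
  have gk: "norm (g k) \<le> (if 5 \<le> k then 4 * (2 ^ k / fact k) else 0)" if "k \<in> {..n} - {1}" for k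
  proof (cases "k mod 4 = 1")
    case True
    moreover have "k \<noteq> 1"
      using that by simp
    ultimately have "5 \<le> k"
      by presburger
    have "norm (g k) \<le> 4 * real (n choose k) * w ^ k * norm A ^ k"
      using True w by (simp add: g_def norm_power_ineq mult_left_mono)
    also have "\<dots> = 4 * (real (n choose k) * (2 / real n) ^ k)"
      by (simp add: w(2)[symmetric] power_mult_distrib)
    also have "\<dots> \<le> 4 * (2 ^ k / fact k)"
      using binomial_mult_power_le[of n 2 k] assms(2) by simp
    finally show ?thesis
      using \<open>5 \<le> k\<close> by simp
  qed (simp add: g_def)
  have "norm (\<Sum>k\<in>{..n} - {1}. g k) \<le> (\<Sum>k\<in>{..n} - {1}. if 5 \<le> k then 4 * (2 ^ k / fact k) else 0)"
    using gk by (intro order_trans[OF norm_sum sum_mono])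
  also have "\<dots> \<le> (\<Sum>k\<le>n. if 5 \<le> k then 4 * (2 ^ k / fact k) else 0)"
    by (intro sum_mono2) auto
  also have "\<dots> = 4 * (\<Sum>k\<le>n. if 5 \<le> k then 2 ^ k / fact k else 0)"
    by (simp add: sum_distrib_left if_distrib cong: if_cong)
  also have "\<dots> \<le> 32/15"
    using exp_two_tail_le[of n] by simp
  finally have tail: "norm (\<Sum>k\<in>{..n} - {1}. g k) \<le> 32/15" .
  have "g 1 = (\<Sum>k\<le>n. g k) - (\<Sum>k\<in>{..n} - {1}. g k)"
    using sum.remove[of "{..n}" 1 g] assms(2) by simp
  then have "8 \<le> norm (\<Sum>k\<le>n. g k) + 32/15"
    using g1 tail norm_triangle_ineq4[of "\<Sum>k\<le>n. g k" "\<Sum>k\<in>{..n} - {1}. g k"] by simp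
  then show ?thesis
    by (simp add: g_def)
qed

lemma positive_antisym:
  fixes A :: "'a::cstar_algebra"
  assumes sa: "cstar A = A" and pos: "positive A" "positive (- A)"
  shows "A = 0"
proof (rule ccontr)
  \<comment> \<open>With \<open>w = 2/(n\<parallel>A\<parallel>)\<close> the powers \<open>(1 + zA)\<^sup>n\<close> have norm at most \<open>5/4\<close> at the four points
    \<open>z = \<plusminus>w, \<plusminus>iw\<close>, but their fourth-roots-of-unity filter has norm at least \<open>88/15 > 5\<close>.\<close>
  assume "A \<noteq> 0"
  then have normA: "0 < norm A"
    by simp
  obtain K1 d1 where d1: "0 < d1"
    and h1: "\<And>e. 0 < e \<Longrightarrow> e < d1 \<Longrightarrow> norm (1 - scaleR e A) \<le> 1 + K1 * e\<^sup>2"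
    using pos(1) unfolding positive_def by blast
  obtain K2 d2 where d2: "0 < d2"
    and h2: "\<And>e. 0 < e \<Longrightarrow> e < d2 \<Longrightarrow> norm (1 - scaleR e (- A)) \<le> 1 + K2 * e\<^sup>2"
    using pos(2) unfolding positive_def by blast
  define L where "L = max (max K1 K2) (norm A ^ 2)"
  have L: "K1 \<le> L" "K2 \<le> L" "norm A ^ 2 \<le> L" "0 < L"
    using normA by (auto simp: L_def less_max_iff_disj)
  define \<delta> where "\<delta> = min d1 d2"
  have \<delta>: "0 < \<delta>" "\<delta> \<le> d1" "\<delta> \<le> d2"
    using d1 d2 by (simp_all add: \<delta>_def)
  obtain n :: nat where n: "2 / (norm A * \<delta>) + 32 * L / norm A ^ 2 < real n"
    using reals_Archimedean2 by blast
  have n_gt: "2 / (norm A * \<delta>) < real n" "32 * L / norm A ^ 2 < real n"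
    using n normA \<delta>(1) L(4) by (smt (verit) divide_pos_pos mult_pos_pos zero_less_power)+
  then have "0 < n"
    using normA L(4) by (smt (verit) of_nat_0_less_iff divide_pos_pos zero_less_power mult_pos_pos)
  define w where "w = 2 / (norm A * real n)"
  have "0 < w" "w < \<delta>"
    using n_gt(1) normA \<open>0 < n\<close> \<delta>(1) by (simp_all add: w_def field_simps)
  then have w: "0 < w" "w < d1" "w < d2"
    using \<delta> by simp_all
  have "real n * (L * w\<^sup>2) = 4 * L / (real n * norm A ^ 2)"
    using normA \<open>0 < n\<close> by (simp add: w_def field_simps power2_eq_square)
  also have "\<dots> \<le> 1/8"
    using n_gt(2) normA \<open>0 < n\<close> by (simp add: field_simps)
  finally have nLw: "real n * (L * w\<^sup>2) \<le> 1/8" .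
  define P where "P z = (1 + scaleC z A) ^ n" for z
  have P_le: "norm (P z) \<le> 5/4" if "norm (1 + scaleC z A) \<le> 1 + L * w\<^sup>2" for z
    unfolding P_def using L(4) nLw by (intro norm_power_le_of_norm_le[OF that]) auto
  have real_le: "norm (1 - scaleR w B) \<le> 1 + L * w\<^sup>2"
    if "norm (1 - scaleR w B) \<le> 1 + K * w\<^sup>2" "K \<le> L" for B :: 'a and K
    using that(1) mult_right_mono[OF that(2) zero_le_power2[of w]] by linarith
  have imag_le: "norm (1 + scaleC (\<i> * of_real t) A) \<le> 1 + L * w\<^sup>2" if "\<bar>t\<bar> = w" for t
  proof -
    have "t\<^sup>2 = w\<^sup>2"
      using that by (metis power2_abs)
    then show ?thesis
      using norm_one_plus_imaginary_le[OF sa, of t] mult_right_mono[OF L(3) zero_le_power2[of w]]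
      by (simp add: mult.commute)
  qed
  have P1: "norm (P (of_real w)) \<le> 5/4"
    using real_le[OF h2[OF w(1,3)] L(2)] by (intro P_le) (simp add: scaleC_of_real)
  have P2: "norm (P (- of_real w)) \<le> 5/4"
    using real_le[OF h1[OF w(1,2)] L(1)] by (intro P_le) (simp add: scaleC_minus_left scaleC_of_real)
  have P3: "norm (P (\<i> * of_real w)) \<le> 5/4"
    using w(1) by (intro P_le imag_le) simp
  have P4: "norm (P (- (\<i> * of_real w))) \<le> 5/4"
  proof (rule P_le)
    have "\<bar>- w\<bar> = w"
      using w(1) by simp
    from imag_le[OF this] show "norm (1 + scaleC (- (\<i> * of_real w)) A) \<le> 1 + L * w\<^sup>2"
      by (simp only: of_real_minus mult_minus_right)
  qed
  have "norm (P (of_real w) - scaleC \<i> (P (\<i> * of_real w)) - P (- of_real w)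
      + scaleC \<i> (P (- (\<i> * of_real w)))) \<le> 5"
  proof -
    have tri: "norm (a - b - c + d) \<le> norm a + norm b + norm c + norm d" for a b c d :: 'a
      using norm_triangle_ineq[of "a - b - c" d] norm_triangle_ineq4[of "a - b" c]
        norm_triangle_ineq4[of a b] by linarith
    show ?thesis
      using tri[of "P (of_real w)" "scaleC \<i> (P (\<i> * of_real w))" "P (- of_real w)"
          "scaleC \<i> (P (- (\<i> * of_real w)))"] P1 P2 P3 P4
      by (simp only: norm_scaleC norm_ii mult_1)
  qed
  moreover have "88/15 \<le> norm (P (of_real w) - scaleC \<i> (P (\<i> * of_real w)) - P (- of_real w)
      + scaleC \<i> (P (- (\<i> * of_real w))))"
    unfolding P_def root_filter_power_one_plus w_def using \<open>A \<noteq> 0\<close> \<open>0 < n\<close>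
    by (rule norm_root_filter_ge)
  ultimately show False
    by simp
qed

section \<open>Sums of squares vanish termwise\<close>

definition re_part :: "'a::cstar_algebra \<Rightarrow> 'a" where
  "re_part z = scaleR (1/2) (z + cstar z)"

definition im_part :: "'a::cstar_algebra \<Rightarrow> 'a" where
  "im_part z = scaleC (- \<i> / 2) (z - cstar z)"

lemma cstar_re_part [simp]: "cstar (re_part z) = re_part z"
  by (simp add: re_part_def cstar_scaleR cstar_add cstar_cstar add.commute)

lemma cstar_im_part [simp]: "cstar (im_part z) = im_part z"
proof -
  have "cstar (im_part z) = scaleC (- (- \<i> / 2)) (- (z - cstar z))"
    by (simp add: im_part_def cstar_scaleC cstar_diff cstar_cstar)
  then show ?thesis
    by (simp only: scaleC_minus_left scaleC_minus_right minus_minus im_part_def)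
qed

lemma re_part_plus_im_part: "re_part z + scaleC \<i> (im_part z) = z"
proof -
  have "scaleC \<i> (im_part z) = scaleR (1/2) (z - cstar z)"
    by (simp add: im_part_def scaleC_scaleC flip: scaleC_of_real)
  then show ?thesis
    by (simp add: re_part_def flip: scaleR_add_right)
qed

lemma mult_cstar_add_cstar_mult:
  "z * cstar z + cstar z * z = scaleR 2 (re_part z * re_part z + im_part z * im_part z)"
proof -
  define h g where "h = re_part z" and "g = im_part z"
  have z: "z = h + scaleC \<i> g"
    by (simp add: h_def g_def re_part_plus_im_part)
  have "cstar z = cstar h + scaleC (cnj \<i>) (cstar g)"
    by (subst z) (simp add: cstar_add cstar_scaleC)
  then have cz: "cstar z = h - scaleC \<i> g"
    by (simp add: h_def g_def scaleC_minus_left)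
  have "scaleC \<i> g * scaleC \<i> g = - (g * g)"
    by (simp add: scaleC_mult_scaleC scaleC_minus_left scaleC_one)
  then have "(h + scaleC \<i> g) * (h - scaleC \<i> g) + (h - scaleC \<i> g) * (h + scaleC \<i> g)
      = scaleR 2 (h * h + g * g)"
    by (simp add: algebra_simps scaleR_2)
  then show ?thesis
    by (simp only: cz flip: z h_def g_def)
qed

lemma selfadjoint_sum_squares_eq_zero:
  assumes "cstar h = h" "cstar g = g" "h * h + g * g = 0"
  shows "h = 0"
proof -
  have "- (h * h) = g * g"
    using assms(3) by (metis add.commute add_eq_0_iff)
  then have "h * h = 0"
    using assms(1,2) by (intro positive_antisym) (simp_all add: cstar_mult positive_square)
  then show ?thesis
    using cstar_identity[of h] assms(1) by simp
qed

lemma positive_sum_eq_zero: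
  assumes "finite F" "\<And>k. k \<in> F \<Longrightarrow> positive (p k)" "cstar (p m) = p m" "sum p F = 0" "m \<in> F"
  shows "p m = 0"
proof (rule positive_antisym)
  have eq: "- p m = sum p (F - {m})"
    using sum.remove[OF assms(1,5), of p] assms(4) by (metis add_eq_0_iff)
  show "positive (- p m)"
    unfolding eq using assms(1,2) by (intro positive_sum) auto
qed (use assms in simp_all)

lemma sum_mult_cstar_add_cstar_mult_eq_zero:
  assumes "finite F" "(\<Sum>k\<in>F. z k * cstar (z k) + cstar (z k) * z k) = 0" "m \<in> F"
  shows "z m = 0"
proof -
  define p where "p k = re_part (z k) * re_part (z k) + im_part (z k) * im_part (z k)" for k
  have "scaleR 2 (sum p F) = 0"
    using assms(2) unfolding scaleR_sum_right p_def by (simp only: mult_cstar_add_cstar_mult)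
  then have sum_eq: "sum p F = 0"
    by simp
  have "p m = 0"
    by (rule positive_sum_eq_zero[OF assms(1) _ _ sum_eq assms(3)])
      (simp_all add: p_def positive_add positive_square cstar_add cstar_mult)
  then have "re_part (z m) = 0" "im_part (z m) = 0"
    using selfadjoint_sum_squares_eq_zero[of "re_part (z m)" "im_part (z m)"]
      selfadjoint_sum_squares_eq_zero[of "im_part (z m)" "re_part (z m)"]
    by (simp_all add: p_def add.commute)
  then show ?thesis
    using re_part_plus_im_part[of "z m"] by simp
qed

section \<open>Half-commutation\<close>

definition biunitary :: "nat \<Rightarrow> (nat \<Rightarrow> 'a::cstar_algebra) \<Rightarrow> bool" where
  "biunitary N u \<longleftrightarrow> (\<Sum>i<N. u i * cstar (u i)) = 1 \<and> (\<Sum>i<N. cstar (u i) * u i) = 1"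

definition half_commute :: "nat \<Rightarrow> (nat \<Rightarrow> 'a::times) \<Rightarrow> (nat \<Rightarrow> 'a) \<Rightarrow> (nat \<Rightarrow> 'a) \<Rightarrow> bool" where
  "half_commute N a b c \<longleftrightarrow> (\<forall>i<N. \<forall>j<N. \<forall>k<N. a i * b j * c k = c k * b j * a i)"

lemma half_commute_sym: "half_commute N a b c \<longleftrightarrow> half_commute N c b a"
  unfolding half_commute_def by metis

lemma half_commute_cstar:
  "half_commute N a b c \<Longrightarrow> half_commute N (\<lambda>i. cstar (a i)) (\<lambda>i. cstar (b i)) (\<lambda>i. cstar (c i))"
  unfolding half_commute_def by (metis cstar_mult mult.assoc)

lemma biunitary_cstar: "biunitary N u \<Longrightarrow> biunitary N (\<lambda>i. cstar (u i))"
  by (simp add: biunitary_def cstar_cstar)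

lemma biunitary_contract:
  assumes "biunitary N u"
  shows "(\<Sum>i<N. u i * (cstar (u i) * r)) = r" "(\<Sum>i<N. cstar (u i) * (u i * r)) = r"
  using assms by (simp_all add: biunitary_def mult.assoc [symmetric] flip: sum_distrib_right)

lemma sum_triple_reverse:
  "(\<Sum>i<N. \<Sum>j<N. \<Sum>k<(N::nat). f i j k) = (\<Sum>k<N. \<Sum>j<N. \<Sum>i<N. (f i j k :: 'a::comm_monoid_add))"
proof -
  have "(\<Sum>i<N. \<Sum>j<N. \<Sum>k<N. f i j k) = (\<Sum>i<N. \<Sum>k<N. \<Sum>j<N. f i j k)"
    by (rule sum.cong[OF refl], rule sum.swap)
  also have "\<dots> = (\<Sum>k<N. \<Sum>i<N. \<Sum>j<N. f i j k)" by (rule sum.swap)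
  also have "\<dots> = (\<Sum>k<N. \<Sum>j<N. \<Sum>i<N. f i j k)"
    by (rule sum.cong[OF refl], rule sum.swap)
  finally show ?thesis .
qed

lemma half_commute_assoc:
  fixes a b c :: "nat \<Rightarrow> 'a::semigroup_mult"
  assumes "half_commute N a b c" "i < N" "j < N" "k < N"
  shows "a i * (b j * (c k * r)) = c k * (b j * (a i * r))"
proof -
  have "a i * b j * c k * r = c k * b j * a i * r"
    using assms by (simp add: half_commute_def)
  then show ?thesis by (simp add: mult.assoc)
qed

lemma half_commutator_sum_eq_zero:
  fixes u v w :: "nat \<Rightarrow> 'a::cstar_algebra"
  assumes bu: "biunitary N u" and bv: "biunitary N v" and bw: "biunitary N w"
    and hc: "half_commute N w (\<lambda>i. cstar (u i)) (\<lambda>i. cstar (v i))"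
  defines "z i j k \<equiv> u i * v j * w k - w k * v j * u i"
  shows "(\<Sum>i<N. \<Sum>j<N. \<Sum>k<N. z i j k * cstar (z i j k) + cstar (z i j k) * z i j k) = 0"
proof -
  \<comment> \<open>The expansion of \<open>z z\<^sup>* + z\<^sup>* z\<close> has four nested words, which contract to \<open>1\<close> directly,
    and four mixed ones; \<open>hc\<close> turns \<open>mixed1\<close> and \<open>mixed3\<close> into nested words, and the other
    two are their adjoints.\<close>
  note contract = biunitary_contract[OF bu] biunitary_contract[OF bv] biunitary_contract[OF bw]
  note hc' = half_commute_assoc[OF hc, simplified]
  have mixed1: "(\<Sum>i<N. \<Sum>j<N. \<Sum>k<N. u i * (v j * (w k * (cstar (u i) * (cstar (v j) * cstar (w k)))))) = 1"
  proof -
    have "(\<Sum>i<N. \<Sum>j<N. \<Sum>k<N. u i * (v j * (w k * (cstar (u i) * (cstar (v j) * cstar (w k))))))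
        = (\<Sum>i<N. \<Sum>j<N. \<Sum>k<N. u i * (v j * (cstar (v j) * (cstar (u i) * (w k * (cstar (w k) * 1))))))"
      by (intro sum.cong refl) (simp add: hc')
    then show ?thesis using bw by (simp add: contract biunitary_def flip: sum_distrib_left)
  qed
  have mixed3: "(\<Sum>i<N. \<Sum>j<N. \<Sum>k<N. cstar (w k) * (cstar (v j) * (cstar (u i) * (w k * (v j * u i))))) = 1"
  proof -
    have "(\<Sum>i<N. \<Sum>j<N. \<Sum>k<N. cstar (w k) * (cstar (v j) * (cstar (u i) * (w k * (v j * u i)))))
        = (\<Sum>i<N. \<Sum>j<N. \<Sum>k<N. cstar (w k) * (w k * (cstar (u i) * (cstar (v j) * (v j * u i)))))"
      by (intro sum.cong refl) (simp add: hc')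
    then show ?thesis using bu by (simp add: contract biunitary_def flip: sum_distrib_left)
  qed
  have nested1: "(\<Sum>i<N. \<Sum>j<N. \<Sum>k<N. u i * (v j * (w k * (cstar (w k) * (cstar (v j) * cstar (u i)))))) = 1"
    using bu by (simp add: contract biunitary_def flip: sum_distrib_left)
  have nested2: "(\<Sum>i<N. \<Sum>j<N. \<Sum>k<N. cstar (u i) * (cstar (v j) * (cstar (w k) * (w k * (v j * u i))))) = 1"
    using bu by (simp add: contract biunitary_def flip: sum_distrib_left)
  have nested3: "(\<Sum>i<N. \<Sum>j<N. \<Sum>k<N. w k * (v j * (u i * (cstar (u i) * (cstar (v j) * cstar (w k)))))) = 1"
    using bw by (subst sum_triple_reverse) (simp add: contract biunitary_def flip: sum_distrib_left)
  have nested4: "(\<Sum>i<N. \<Sum>j<N. \<Sum>k<N. cstar (w k) * (cstar (v j) * (cstar (u i) * (u i * (v j * w k))))) = 1"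
    using bw by (subst sum_triple_reverse) (simp add: contract biunitary_def flip: sum_distrib_left)
  have mixed2: "(\<Sum>i<N. \<Sum>j<N. \<Sum>k<N. cstar (u i * (v j * (w k * (cstar (u i) * (cstar (v j) * cstar (w k))))))) = 1"
    using arg_cong[OF mixed1, of cstar] by (simp add: cstar_sum)
  have mixed4: "(\<Sum>i<N. \<Sum>j<N. \<Sum>k<N. cstar (cstar (w k) * (cstar (v j) * (cstar (u i) * (w k * (v j * u i)))))) = 1"
    using arg_cong[OF mixed3, of cstar] by (simp add: cstar_sum)
  have "z i j k * cstar (z i j k) + cstar (z i j k) * z i j k
    = u i * (v j * (w k * (cstar (w k) * (cstar (v j) * cstar (u i)))))
      + w k * (v j * (u i * (cstar (u i) * (cstar (v j) * cstar (w k)))))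
      + cstar (w k) * (cstar (v j) * (cstar (u i) * (u i * (v j * w k))))
      + cstar (u i) * (cstar (v j) * (cstar (w k) * (w k * (v j * u i))))
      - u i * (v j * (w k * (cstar (u i) * (cstar (v j) * cstar (w k)))))
      - cstar (u i * (v j * (w k * (cstar (u i) * (cstar (v j) * cstar (w k))))))
      - cstar (w k) * (cstar (v j) * (cstar (u i) * (w k * (v j * u i))))
      - cstar (cstar (w k) * (cstar (v j) * (cstar (u i) * (w k * (v j * u i)))))" for i j k
    by (simp add: z_def cstar_diff cstar_mult cstar_cstar algebra_simps)
  then show ?thesis
    by (simp add: sum.distrib sum_subtractf nested1 nested2 nested3 nested4 mixed1 mixed2 mixed3 mixed4)
qed

lemma half_commute_of_biunitary:
  assumes "biunitary N u" "biunitary N v" "biunitary N w"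
    and "half_commute N w (\<lambda>i. cstar (u i)) (\<lambda>i. cstar (v i))"
  shows "half_commute N u v w"
  unfolding half_commute_def
proof (intro allI impI)
  fix i j k
  assume ijk: "i < N" "j < N" "k < N"
  define z where "z = (\<lambda>(i, j, k). u i * v j * w k - w k * v j * u i)"
  have triple: "(\<Sum>p\<in>{..<N} \<times> {..<N} \<times> {..<N}. f p) = (\<Sum>i<N. \<Sum>j<N. \<Sum>k<N. f (i, j, k))"
    for f :: "nat \<times> nat \<times> nat \<Rightarrow> 'a"
    by (simp add: sum.cartesian_product)
  have zero: "(\<Sum>p\<in>{..<N} \<times> {..<N} \<times> {..<N}. z p * cstar (z p) + cstar (z p) * z p) = 0"
    unfolding triple using half_commutator_sum_eq_zero[OF assms] by (simp add: z_def)
  have "z (i, j, k) = 0"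
    by (rule sum_mult_cstar_add_cstar_mult_eq_zero[OF _ zero]) (use ijk in auto)
  then show "u i * v j * w k = w k * v j * u i"
    by (simp add: z_def)
qed

lemma half_commute_cstar_middle:
  fixes x :: "nat \<Rightarrow> 'a::cstar_algebra"
  assumes row: "(\<Sum>l<N. x l * cstar (x l)) = 1"
    and hc: "half_commute N x x x" and hc': "half_commute N x x (\<lambda>i. cstar (x i))"
  shows "half_commute N x (\<lambda>i. cstar (x i)) x"
  unfolding half_commute_def
proof (intro allI impI)
  fix i j k
  assume ijk: "i < N" "j < N" "k < N"
  have "x i * cstar (x j) * x k = (\<Sum>l<N. x i * (cstar (x j) * (x k * (x l * cstar (x l)))))"
    by (simp add: mult.assoc row flip: sum_distrib_left)
  also have "\<dots> = (\<Sum>l<N. x k * (cstar (x j) * (x i * (x l * cstar (x l)))))"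
  proof (rule sum.cong[OF refl])
    fix l
    assume "l \<in> {..<N}"
    then have l: "l < N"
      by simp
    have "x i * (cstar (x j) * (x k * (x l * cstar (x l))))
        = x i * (x l * (x k * (cstar (x j) * cstar (x l))))"
      using half_commute_assoc[OF hc' l ijk(3,2)] by simp
    also have "\<dots> = x k * (x l * (x i * (cstar (x j) * cstar (x l))))"
      using half_commute_assoc[OF hc ijk(1) l ijk(3)] by simp
    also have "\<dots> = x k * (cstar (x j) * (x i * (x l * cstar (x l))))"
      using half_commute_assoc[OF hc' l ijk(1,2)] by simp
    finally show "x i * (cstar (x j) * (x k * (x l * cstar (x l))))
        = x k * (cstar (x j) * (x i * (x l * cstar (x l))))" .
  qed
  also have "\<dots> = x k * cstar (x j) * x i"
    by (simp add: mult.assoc row flip: sum_distrib_left)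
  finally show "x i * cstar (x j) * x k = x k * cstar (x j) * x i" .
qed

theorem proposition3p1:
  fixes x :: "nat \<Rightarrow> 'a::cstar_algebra" and N :: nat
  assumes "(\<Sum>i<N. x i * cstar (x i)) = 1"
    and "(\<Sum>i<N. cstar (x i) * x i) = 1"
  shows "((\<forall>a\<in>x ` {..<N}. \<forall>b\<in>x ` {..<N}. \<forall>c\<in>x ` {..<N}. a * b * c = c * b * a)
           \<longleftrightarrow> (\<forall>a\<in>x ` {..<N}. \<forall>b\<in>x ` {..<N}. \<forall>c\<in>x ` {..<N}.
                  a * b * cstar c = cstar c * b * a))
       \<and> ((\<forall>a\<in>x ` {..<N}. \<forall>b\<in>x ` {..<N}. \<forall>c\<in>x ` {..<N}. a * b * c = c * b * a)
           \<longrightarrow> (\<forall>a\<in>x ` {..<N}. \<forall>b\<in>x ` {..<N}. \<forall>c\<in>x ` {..<N}.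
                  a * cstar b * c = c * cstar b * a))"
proof -
  let ?y = "\<lambda>i. cstar (x i)"
  have bx: "biunitary N x"
    using assms by (simp add: biunitary_def)
  then have bx_cstar: "biunitary N ?y"
    by (rule biunitary_cstar)
  have img: "(\<forall>a\<in>x ` {..<N}. \<forall>b\<in>x ` {..<N}. \<forall>c\<in>x ` {..<N}. P a b c)
      \<longleftrightarrow> (\<forall>i<N. \<forall>j<N. \<forall>k<N. P (x i) (x j) (x k))" for P
    by auto
  have one_three: "half_commute N x x ?y" if "half_commute N x x x"
    using bx bx bx_cstar by (rule half_commute_of_biunitary) (rule half_commute_cstar[OF that])
  have three_one: "half_commute N x x x" if "half_commute N x x ?y"
  proof (rule half_commute_of_biunitary[OF bx bx bx])
    show "half_commute N x ?y ?y"
      using half_commute_cstar[OF that] by (simp add: cstar_cstar half_commute_sym)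
  qed
  have one_two: "half_commute N x ?y x" if "half_commute N x x x"
    using assms(1) that one_three[OF that] by (rule half_commute_cstar_middle)
  show ?thesis
    unfolding img using one_three three_one one_two unfolding half_commute_def by blast
qed

end
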